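(* Let $G$ be a finite simple graph. If $\chi_c(G) < g(G)$, then $G$ is a cover graph.
   Context: $\chi_c(G)$ is the circular chromatic number of $G$ (the infimum of $k/d$ over all $(k,d)$-colorings, i.e. maps $c:V(G)\to\{0,\dots,k-1\}$ with $d\le |c(x)-c(y)|\le k-d$ for every edge $xy$). $g(G)$ is the girth of $G$ (length of a shortest cycle, $\infty$ if $G$ has no cycles). A graph is a cover graph if it is the underlying (undirected) graph of the Hasse diagram of some finite partially ordered set. *)

theory Defs
  imports Complex_Main "HOL-Library.Extended_Real"
begin

definition simple_graph :: "'a set \<Rightarrow> ('a \<Rightarrow> 'a \<Rightarrow> bool) \<Rightarrow> bool" where
  "simple_graph V E \<longleftrightarrow> finite V \<and> (\<forall>x y. E x y \<longrightarrow> x \<in> V \<and> y \<in> V)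
     \<and> (\<forall>x y. E x y \<longrightarrow> E y x) \<and> (\<forall>x. \<not> E x x)"

definition kd_coloring :: "'a set \<Rightarrow> ('a \<Rightarrow> 'a \<Rightarrow> bool) \<Rightarrow> nat \<Rightarrow> nat \<Rightarrow> ('a \<Rightarrow> nat) \<Rightarrow> bool" where
  "kd_coloring V E k d c \<longleftrightarrow> (\<forall>x\<in>V. c x < k) \<and>
     (\<forall>x y. E x y \<longrightarrow> int d \<le> \<bar>int (c x) - int (c y)\<bar> \<and> \<bar>int (c x) - int (c y)\<bar> \<le> int k - int d)"

definition circular_chromatic_number :: "'a set \<Rightarrow> ('a \<Rightarrow> 'a \<Rightarrow> bool) \<Rightarrow> real" where
  "circular_chromatic_number V E =
     Inf {real k / real d | k d. 1 \<le> k \<and> 1 \<le> d \<and> (\<exists>c. kd_coloring V E k d c)}"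

definition is_cycle :: "'a set \<Rightarrow> ('a \<Rightarrow> 'a \<Rightarrow> bool) \<Rightarrow> 'a list \<Rightarrow> bool" where
  "is_cycle V E cs \<longleftrightarrow> length cs \<ge> 3 \<and> distinct cs \<and> set cs \<subseteq> V \<and>
     (\<forall>i < length cs. E (cs ! i) (cs ! ((i + 1) mod length cs)))"

text \<open>Girth: length of a shortest cycle, \<infinity> if there is none (Inf {} = \<infinity> in enat).\<close>
definition girth :: "'a set \<Rightarrow> ('a \<Rightarrow> 'a \<Rightarrow> bool) \<Rightarrow> enat" where
  "girth V E = Inf {enat (length cs) | cs. is_cycle V E cs}"

definition covers :: "'a set \<Rightarrow> 'a rel \<Rightarrow> 'a \<Rightarrow> 'a \<Rightarrow> bool" where
  "covers V r x y \<longleftrightarrow> (x, y) \<in> r \<and> x \<noteq> y \<and>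
     \<not> (\<exists>z\<in>V. z \<noteq> x \<and> z \<noteq> y \<and> (x, z) \<in> r \<and> (z, y) \<in> r)"

definition cover_graph :: "'a set \<Rightarrow> ('a \<Rightarrow> 'a \<Rightarrow> bool) \<Rightarrow> bool" where
  "cover_graph V E \<longleftrightarrow> (\<exists>r. partial_order_on V r \<and>
     (\<forall>x\<in>V. \<forall>y\<in>V. E x y \<longleftrightarrow> covers V r x y \<or> covers V r y x))"

end

theory Submission
  imports Defs
begin

text \<open>Take a (k,d)-colouring c with k/d below the girth and orient every edge towards its
  larger colour. Along a directed path the colour grows by at least d per step, whereas the two
  ends of an edge differ by at most k - d; so a directed path of length at least 3 joined by an
  edge would close a cycle of length n with n d \<le> k < n d. Hence the reachability order of this
  acyclic orientation has exactly the edges of the graph as its covering pairs.\<close>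

lemma successively_add_le_imp_last_ge:
  assumes "successively (\<lambda>a b. f a + (d::nat) \<le> f b) xs" "xs \<noteq> []"
  shows "f (hd xs) + (length xs - 1) * d \<le> f (last xs)"
  using assms
proof (induction xs rule: induct_list012)
  case (3 a b xs)
  then show ?case by (auto simp: algebra_simps)
qed auto

lemma successively_less_imp_distinct:
  assumes "successively (\<lambda>a b. (f a :: 'b::linorder) < f b) xs"
  shows "distinct xs"
proof -
  have "sorted_wrt (<) (map f xs)"
    using assms by (simp add: successively_map successively_conv_sorted_wrt[symmetric])
  then show ?thesis
    by (simp add: strict_sorted_iff distinct_map)
qed

lemma successively_append_tl:
  assumes "successively P xs" "successively P ys" "xs \<noteq> []" "last xs = hd ys"
  shows "successively P (xs @ tl ys)"
  using assms by (cases ys rule: remdups_adj.cases) (auto simp: successively_append_iff)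

lemma last_append_tl:
  "xs \<noteq> [] \<Longrightarrow> ys \<noteq> [] \<Longrightarrow> last xs = hd ys \<Longrightarrow> last (xs @ tl ys) = last ys"
  by (cases ys rule: remdups_adj.cases) auto

lemma length_ge_2_if_hd_neq_last:
  "xs \<noteq> [] \<Longrightarrow> hd xs \<noteq> last xs \<Longrightarrow> length xs \<ge> 2"
  by (cases xs rule: remdups_adj.cases) auto

locale kd_colored_graph =
  fixes V :: "'a set" and E :: "'a \<Rightarrow> 'a \<Rightarrow> bool" and k d :: nat and c :: "'a \<Rightarrow> nat"
  assumes graph: "simple_graph V E"
    and coloring: "kd_coloring V E k d c"
    and d_pos: "1 \<le> d"
begin

lemma edge_sym: "E x y \<Longrightarrow> E y x"
  and edge_in_V: "E x y \<Longrightarrow> x \<in> V \<and> y \<in> V"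
  using graph by (auto simp: simple_graph_def)

lemma edge_color_dist:
  assumes "E x y"
  shows "int d \<le> \<bar>int (c x) - int (c y)\<bar>" "\<bar>int (c x) - int (c y)\<bar> \<le> int k - int d"
  using coloring assms by (auto simp: kd_coloring_def)

definition ascending_path :: "'a list \<Rightarrow> bool" where
  "ascending_path ps \<longleftrightarrow> ps \<noteq> [] \<and> set ps \<subseteq> V \<and> successively (\<lambda>a b. E a b \<and> c a < c b) ps"

definition ascent_order :: "'a rel" where
  "ascent_order = {(hd ps, last ps) | ps. ascending_path ps}"

lemma ascending_path_color_gain:
  assumes "ascending_path ps"
  shows "c (hd ps) + (length ps - 1) * d \<le> c (last ps)"
proof (rule successively_add_le_imp_last_ge)
  show "successively (\<lambda>a b. c a + d \<le> c b) ps"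
    using assms unfolding ascending_path_def
    by (auto elim!: successively_mono dest: edge_color_dist)
qed (use assms in \<open>simp add: ascending_path_def\<close>)

lemma ascending_path_distinct: "ascending_path ps \<Longrightarrow> distinct ps"
  unfolding ascending_path_def
  by (metis (mono_tags, lifting) successively_less_imp_distinct successively_mono)

lemma ascending_path_append:
  assumes "ascending_path ps" "ascending_path qs" "last ps = hd qs"
  shows "ascending_path (ps @ tl qs)"
  using assms successively_append_tl[of _ ps qs]
  by (auto simp: ascending_path_def dest: list.set_sel(2))

lemma ascending_path_color_less:
  assumes "ascending_path ps" "length ps \<ge> 2"
  shows "c (hd ps) < c (last ps)"
proof -
  from assms(2) have "1 * d \<le> (length ps - 1) * d"
    by (intro mult_le_mono1) simp
  then show ?thesis
    using ascending_path_color_gain[OF assms(1)] d_pos by linarith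
qed

lemma ascending_path_edge: "E x y \<Longrightarrow> c x < c y \<Longrightarrow> ascending_path [x, y]"
  by (simp add: ascending_path_def edge_in_V)

lemma ascent_orderE:
  assumes "(x, y) \<in> ascent_order"
  obtains ps where "ascending_path ps" "hd ps = x" "last ps = y"
  using assms by (auto simp: ascent_order_def)

lemma ascent_orderI: "ascending_path ps \<Longrightarrow> (hd ps, last ps) \<in> ascent_order"
  by (auto simp: ascent_order_def)

lemma ascent_order_color_less: "(x, y) \<in> ascent_order \<Longrightarrow> x \<noteq> y \<Longrightarrow> c x < c y"
  by (metis ascent_orderE ascending_path_color_less ascending_path_def length_ge_2_if_hd_neq_last)

lemma ascent_order_trans:
  assumes "(x, y) \<in> ascent_order" "(y, z) \<in> ascent_order"
  obtains ps where "ascending_path ps" "hd ps = x" "last ps = z"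
    "length ps \<ge> 3 \<or> x = y \<or> y = z"
proof -
  from assms obtain ps qs where ps: "ascending_path ps" "hd ps = x" "last ps = y"
    and qs: "ascending_path qs" "hd qs = y" "last qs = z"
    by (metis ascent_orderE)
  have "ps \<noteq> []" "qs \<noteq> []"
    using ps qs by (auto simp: ascending_path_def)
  show thesis
  proof (rule that)
    show "ascending_path (ps @ tl qs)"
      using ps qs by (simp add: ascending_path_append)
    show "hd (ps @ tl qs) = x" "last (ps @ tl qs) = z"
      using ps qs \<open>ps \<noteq> []\<close> \<open>qs \<noteq> []\<close> by (auto simp: last_append_tl)
    have "length ps \<ge> 2 \<and> length qs \<ge> 2" if "x \<noteq> y" "y \<noteq> z"
      using ps qs that \<open>ps \<noteq> []\<close> \<open>qs \<noteq> []\<close> by (auto intro: length_ge_2_if_hd_neq_last)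
    then show "length (ps @ tl qs) \<ge> 3 \<or> x = y \<or> y = z"
      by force
  qed
qed

lemma partial_order_on_ascent_order: "partial_order_on V ascent_order"
  unfolding partial_order_on_def preorder_on_def
proof (intro conjI)
  show "ascent_order \<subseteq> V \<times> V"
    by (auto simp: ascent_order_def ascending_path_def)
  show "refl_on V ascent_order"
    using ascent_orderI[of "[x]" for x]
    by (auto simp: refl_on_def ascending_path_def ascent_order_def)
  show "trans ascent_order"
    by (rule transI) (metis ascent_order_trans ascent_orderI)
  show "antisym ascent_order"
    by (rule antisymI) (metis ascent_order_color_less less_asym)
qed

lemma ascending_path_closed_is_cycle:
  assumes ps: "ascending_path ps" "length ps \<ge> 3" "E (last ps) (hd ps)"
  shows "is_cycle V E ps"
  unfolding is_cycle_def
proof (intro conjI allI impI)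
  show "3 \<le> length ps" "distinct ps" "set ps \<subseteq> V"
    using ps ascending_path_distinct by (auto simp: ascending_path_def)
  fix i assume i: "i < length ps"
  show "E (ps ! i) (ps ! ((i + 1) mod length ps))"
  proof (cases "Suc i < length ps")
    case True
    from ps(1) have "successively (\<lambda>a b. E a b \<and> c a < c b) ps"
      by (simp add: ascending_path_def)
    from successively_nth[OF this True] show ?thesis
      using True by simp
  next
    case False
    then have "Suc i = length ps"
      using i by simp
    then have "i = length ps - 1" "(i + 1) mod length ps = 0"
      by auto
    moreover have "ps \<noteq> []"
      using ps(2) by auto
    ultimately show ?thesis
      using ps(3) by (simp add: last_conv_nth hd_conv_nth)
  qed
qed

lemma edge_if_covers_ascent_order:
  assumes "covers V ascent_order x y"
  shows "E x y"
proof -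
  from assms obtain ps where ps: "ascending_path ps" "hd ps = x" "last ps = y" and "x \<noteq> y"
    and no_between: "\<not> (\<exists>z\<in>V. z \<noteq> x \<and> z \<noteq> y \<and> (x, z) \<in> ascent_order \<and> (z, y) \<in> ascent_order)"
    unfolding covers_def by (auto elim: ascent_orderE)
  then have "length ps \<ge> 2"
    by (simp add: ascending_path_def length_ge_2_if_hd_neq_last)
  then obtain v rs where ps_eq: "ps = x # v # rs"
    using ps(2) by (cases ps rule: remdups_adj.cases) auto
  have xv: "E x v" "c x < c v" and tl_path: "ascending_path (v # rs)"
    using ps(1) by (auto simp: ps_eq ascending_path_def)
  show ?thesis
  proof (cases rs)
    case Nil
    then show ?thesis using ps(3) xv by (simp add: ps_eq)
  next
    case (Cons w ws)
    have "c v < c y"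
      using ascending_path_color_less[OF tl_path] ps(3) by (simp add: ps_eq Cons)
    moreover have "(x, v) \<in> ascent_order"
      using ascent_orderI[OF ascending_path_edge[OF xv]] by simp
    moreover have "(v, y) \<in> ascent_order"
      using ascent_orderI[OF tl_path] ps(3) by (simp add: ps_eq Cons)
    moreover have "v \<in> V"
      using tl_path by (simp add: ascending_path_def)
    ultimately show ?thesis
      using no_between xv(2) by auto
  qed
qed

end

locale kd_colored_graph_below_girth = kd_colored_graph +
  assumes cycle_long: "is_cycle V E cs \<Longrightarrow> k < d * length cs"
begin

lemma ascending_path_along_edge_short:
  assumes ps: "ascending_path ps" "E (hd ps) (last ps)"
  shows "length ps < 3"
proof (rule ccontr)
  assume "\<not> length ps < 3"
  then have "is_cycle V E ps"
    using ps by (simp add: ascending_path_closed_is_cycle edge_sym)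
  then have "k < d * length ps"
    by (rule cycle_long)
  moreover have "c (hd ps) + (length ps - 1) * d \<le> c (last ps)"
    using ps(1) by (rule ascending_path_color_gain)
  moreover have "int (c (last ps)) - int (c (hd ps)) \<le> int k - int d"
    using edge_color_dist(2)[OF ps(2)] by linarith
  ultimately show False
    using \<open>\<not> length ps < 3\<close> by (cases "length ps") (auto simp: algebra_simps)
qed

lemma covers_ascent_order_if_edge:
  assumes "E x y" "c x < c y"
  shows "covers V ascent_order x y"
  unfolding covers_def
proof (intro conjI)
  show "(x, y) \<in> ascent_order"
    using ascent_orderI[OF ascending_path_edge[OF assms]] by simp
  show "x \<noteq> y"
    using assms(2) by auto
  show "\<not> (\<exists>z\<in>V. z \<noteq> x \<and> z \<noteq> y \<and> (x, z) \<in> ascent_order \<and> (z, y) \<in> ascent_order)"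
  proof
    assume "\<exists>z\<in>V. z \<noteq> x \<and> z \<noteq> y \<and> (x, z) \<in> ascent_order \<and> (z, y) \<in> ascent_order"
    then obtain ps where "ascending_path ps" "hd ps = x" "last ps = y" "length ps \<ge> 3"
      by (metis ascent_order_trans)
    then show False
      using ascending_path_along_edge_short assms(1) by fastforce
  qed
qed

theorem cover_graph: "cover_graph V E"
  unfolding cover_graph_def
proof (intro exI conjI ballI)
  show "partial_order_on V ascent_order"
    by (rule partial_order_on_ascent_order)
  fix x y
  assume "x \<in> V" "y \<in> V"
  have "c x \<noteq> c y" if "E x y"
    using edge_color_dist(1)[OF that] d_pos by auto
  then show "E x y \<longleftrightarrow> covers V ascent_order x y \<or> covers V ascent_order y x"
    using covers_ascent_order_if_edge edge_if_covers_ascent_order edge_sym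
    by (metis linorder_neqE_nat)
qed

end

lemma girth_le_cycle_length: "is_cycle V E cs \<Longrightarrow> girth V E \<le> enat (length cs)"
  unfolding girth_def by (auto intro: Inf_lower)

lemma simple_graph_has_kd_coloring:
  assumes "simple_graph V E"
  shows "\<exists>k c. 1 \<le> k \<and> kd_coloring V E k 1 c"
proof -
  obtain f and n :: nat where f: "f ` V = {i. i < n}" "inj_on f V"
    using assms finite_imp_inj_to_nat_seg by (metis simple_graph_def)
  have "kd_coloring V E (n + 1) 1 f"
    unfolding kd_coloring_def
  proof (intro conjI ballI allI impI)
    show "f x < n + 1" if "x \<in> V" for x
      using f(1) imageI[OF that, of f] by auto
    fix x y assume "E x y"
    then have "x \<in> V" "y \<in> V" "x \<noteq> y"
      using assms by (auto simp: simple_graph_def)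
    then have "f x \<noteq> f y" "f x < n" "f y < n"
      using f by (auto simp: inj_on_def)
    then show "int 1 \<le> \<bar>int (f x) - int (f y)\<bar>" "\<bar>int (f x) - int (f y)\<bar> \<le> int (n + 1) - int 1"
      by auto
  qed
  then show ?thesis
    by auto
qed

lemma kd_coloring_below_girth:
  assumes "simple_graph V E"
    and "ereal (circular_chromatic_number V E) < ereal_of_enat (girth V E)"
  obtains k d c where "kd_coloring V E k d c" "1 \<le> d" "\<And>cs. is_cycle V E cs \<Longrightarrow> k < d * length cs"
proof -
  define ratios where
    "ratios = {real k / real d | k d. 1 \<le> k \<and> 1 \<le> d \<and> (\<exists>c. kd_coloring V E k d c)}"
  have "ratios \<noteq> {}"
    using simple_graph_has_kd_coloring[OF assms(1)] by (fastforce simp: ratios_def)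
  have "\<exists>r\<in>ratios. ereal r < ereal_of_enat (girth V E)"
  proof (cases "girth V E")
    case (enat g)
    then have "Inf ratios < real g"
      using assms(2) by (simp add: circular_chromatic_number_def ratios_def)
    then show ?thesis
      using cInf_lessD[OF \<open>ratios \<noteq> {}\<close>] enat by auto
  next
    case infinity
    then show ?thesis
      using \<open>ratios \<noteq> {}\<close> by auto
  qed
  then obtain k d c where kd: "1 \<le> k" "1 \<le> d" "kd_coloring V E k d c"
    and below: "ereal (real k / real d) < ereal_of_enat (girth V E)"
    unfolding ratios_def by blast
  show thesis
  proof (rule that[OF kd(3,2)])
    fix cs assume "is_cycle V E cs"
    then have "ereal_of_enat (girth V E) \<le> ereal_of_enat (enat (length cs))"
      by (simp only: ereal_of_enat_le_iff girth_le_cycle_length)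
    with below have "ereal (real k / real d) < ereal_of_enat (enat (length cs))"
      by (rule less_le_trans)
    then have "real k / real d < real (length cs)"
      by simp
    then show "k < d * length cs"
      using kd(2) by (simp add: field_simps flip: of_nat_mult)
  qed
qed

theorem theorem14:
  fixes V :: "'a set" and E :: "'a \<Rightarrow> 'a \<Rightarrow> bool"
  assumes "simple_graph V E"
    and "ereal (circular_chromatic_number V E) < ereal_of_enat (girth V E)"
  shows "cover_graph V E"
proof -
  obtain k d c where "kd_coloring V E k d c" "1 \<le> d" "\<And>cs. is_cycle V E cs \<Longrightarrow> k < d * length cs"
    using kd_coloring_below_girth[OF assms] by blast
  then interpret kd_colored_graph_below_girth V E k d c
    using assms(1) by unfold_locales
  show ?thesis
    by (rule cover_graph)
qed

end
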